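(* Let $\mathcal{C}=\{C_1,\ldots,C_r\}$ be a partition of $C$. Suppose that the sub-vectors $\mathbf{T}^{C_1},\ldots,\mathbf{T}^{C_r}$ are mutually independent, where $\mathbf{T}^{C_j}=(T_i)_{i\in C_j}$, and that each $\mathbf{T}^{C_j}$ is exchangeable. Then $q$ is $\mathcal{C}$-decomposable.
   Context: Consider components $C=[n]$ with random lifetimes $T_1,\ldots,T_n$ whose joint distribution has no ties. The relative quality function is $q(A)=\Pr(\max_{i\notin A}T_i<\min_{i\in A}T_i)$, with $q(\varnothing)=q([n])=1$. For a partition $\mathcal{C}=\{C_1,\ldots,C_r\}$ of $C$ into nonempty blocks, write $n_j=|C_j|$, $A_j=A\cap C_j$, and $q^{C_j}(A)=\Pr(\max_{i\in C_j\setminus A}T_i<\min_{i\in A}T_i)$ for $A\subseteq C_j$. A function $c\colon 2^C\to\mathbb{R}$ is $\mathcal{C}$-symmetric if $c(A)$ depends only on $(|A_1|,\ldots,|A_r|)$. The function $q$ is $\mathcal{C}$-decomposable if $q(A)=c(A)\prod_{j=1}^r q^{C_j}(A_j)$ for all $A\subseteq C$, for some $\mathcal{C}$-symmetric $c$. *)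

theory Defs
  imports "HOL-Probability.Probability" "HOL-Combinatorics.Permutations" "HOL-Library.Disjoint_Sets"
begin

text \<open>For A = {} or A = D the event is the whole
  space, so the value is 1.\<close>
definition rel_quality :: "'w measure \<Rightarrow> (nat \<Rightarrow> 'w \<Rightarrow> real) \<Rightarrow> nat set \<Rightarrow> nat set \<Rightarrow> real" where
  "rel_quality M T D A =
     measure M {\<omega> \<in> space M. \<forall>i\<in>D - A. \<forall>j\<in>A. T i \<omega> < T j \<omega>}"

definition partition_symmetric :: "nat set \<Rightarrow> nat set set \<Rightarrow> (nat set \<Rightarrow> real) \<Rightarrow> bool" where
  "partition_symmetric C P c \<longleftrightarrow>
     (\<forall>A B. A \<subseteq> C \<longrightarrow> B \<subseteq> C \<longrightarrow> (\<forall>D\<in>P. card (A \<inter> D) = card (B \<inter> D)) \<longrightarrow> c A = c B)"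

definition partition_decomposable :: "'w measure \<Rightarrow> (nat \<Rightarrow> 'w \<Rightarrow> real) \<Rightarrow> nat set \<Rightarrow> nat set set \<Rightarrow> bool" where
  "partition_decomposable M T C P \<longleftrightarrow>
     (\<exists>c. partition_symmetric C P c \<and>
        (\<forall>A. A \<subseteq> C \<longrightarrow> rel_quality M T C A = c A * (\<Prod>D\<in>P. rel_quality M T D (A \<inter> D))))"

definition exchangeable_block :: "'w measure \<Rightarrow> (nat \<Rightarrow> 'w \<Rightarrow> real) \<Rightarrow> nat set \<Rightarrow> bool" where
  "exchangeable_block M T D \<longleftrightarrow>
     (\<forall>\<sigma>. \<sigma> permutes D \<longrightarrow>
        distr M (PiM D (\<lambda>_. borel)) (\<lambda>\<omega>. \<lambda>i\<in>D. T (\<sigma> i) \<omega>)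
      = distr M (PiM D (\<lambda>_. borel)) (\<lambda>\<omega>. \<lambda>i\<in>D. T i \<omega>))"

end

theory Submission
  imports Defs
begin

(* Write q(A) for the relative quality of A inside C and p(A) for the
   product over the blocks D of the relative qualities of A \<inter> D inside D.
   Independence of the blocks makes every block D independent of the complementary
   sub-vector on C - D; together with exchangeability of D, permuting the coordinates
   of D therefore leaves the joint law of the whole vector unchanged.  Hence every
   relative quality computed on a union of blocks is invariant under transpositions
   inside a block, so q and p are both partition-symmetric (two sets with the same
   block counts are connected by such transpositions).  Finally q(A) \<le> q_D(A \<inter> D)
   for every block D, so p(A) = 0 forces q(A) = 0, and c = q / p (with c = 0 where
   p vanishes) is a symmetric factor with q = c * p.
   The file first establishes measurability facts, then the probabilistic invariance
   under block permutations, then the combinatorics of block-preserving swaps, and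
   finally derives the theorem inside a locale collecting the hypotheses. *)

section \<open>Measurability of ordering events\<close>

lemma pred_coords_ordered:
  assumes "finite I" "finite J" "I \<subseteq> C" "J \<subseteq> C"
  shows "Measurable.pred (PiM C (\<lambda>_. borel)) (\<lambda>h::nat\<Rightarrow>real. \<forall>i\<in>I. \<forall>j\<in>J. h i < h j)"
proof (intro pred_intros_finite assms)
  fix i j assume "i \<in> I" "j \<in> J"
  then have "i \<in> C" "j \<in> C" using assms by auto
  then show "Measurable.pred (PiM C (\<lambda>_. borel)) (\<lambda>h::nat\<Rightarrow>real. h i < h j)"
    by measurable
qed

lemma ordered_event_sets:
  assumes "finite I" "finite J" "\<And>i. i \<in> I \<union> J \<Longrightarrow> T i \<in> borel_measurable M"
  shows "{\<omega> \<in> space M. \<forall>i\<in>I. \<forall>j\<in>J. T i \<omega> < (T j \<omega>::real)} \<in> sets M"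
proof -
  have "Measurable.pred M (\<lambda>\<omega>. \<forall>i\<in>I. \<forall>j\<in>J. T i \<omega> < (T j \<omega>::real))"
  proof (intro pred_intros_finite assms)
    fix i j assume "i \<in> I" "j \<in> J"
    then have [measurable]: "T i \<in> borel_measurable M" "T j \<in> borel_measurable M"
      using assms by auto
    show "Measurable.pred M (\<lambda>\<omega>. T i \<omega> < T j \<omega>)" by measurable
  qed
  then show ?thesis by (simp add: pred_def)
qed

section \<open>Invariance of the joint law under permutations inside a block\<close>

lemma (in prob_space) indep_block_complement:
  fixes T :: "nat \<Rightarrow> 'a \<Rightarrow> real"
  assumes part: "partition_on C P"
    and indep: "indep_vars (\<lambda>D. PiM D (\<lambda>_. borel)) (\<lambda>D \<omega>. \<lambda>i\<in>D. T i \<omega>) P"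
    and D: "D \<in> P"
  shows "indep_var (PiM D (\<lambda>_. borel)) (\<lambda>\<omega>. \<lambda>i\<in>D. T i \<omega>)
                   (PiM (C - D) (\<lambda>_. borel)) (\<lambda>\<omega>. \<lambda>i\<in>C - D. T i \<omega>)"
proof -
  let ?M' = "\<lambda>D. PiM D (\<lambda>_. borel) :: (nat \<Rightarrow> real) measure"
  let ?X = "\<lambda>D \<omega>. \<lambda>i\<in>D. T i \<omega>"
  have ind: "indep_var (PiM {D} ?M') (\<lambda>\<omega>. restrict (\<lambda>D. ?X D \<omega>) {D})
      (PiM (P - {D}) ?M') (\<lambda>\<omega>. restrict (\<lambda>D. ?X D \<omega>) (P - {D}))"
    by (rule indep_var_restrict[OF indep]) (use D in auto)
  text \<open>Each coordinate outside D is read off from the block containing it.\<close>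
  define blk where "blk i = (SOME D'. D' \<in> P \<and> i \<in> D')" for i
  have blk: "blk i \<in> P - {D} \<and> i \<in> blk i" if "i \<in> C - D" for i
  proof -
    have "\<exists>D'. D' \<in> P \<and> i \<in> D'" using part that unfolding partition_on_def by auto
    then have "blk i \<in> P \<and> i \<in> blk i" unfolding blk_def by (rule someI_ex)
    then show ?thesis using that by auto
  qed
  define g1 where "g1 = (\<lambda>f::nat set \<Rightarrow> nat \<Rightarrow> real. f D)"
  define g2 where "g2 = (\<lambda>f::nat set \<Rightarrow> nat \<Rightarrow> real. \<lambda>i\<in>C - D. f (blk i) i)"
  have m1: "g1 \<in> measurable (PiM {D} ?M') (?M' D)"
    unfolding g1_def by (rule measurable_component_singleton) simp
  have m2: "g2 \<in> measurable (PiM (P - {D}) ?M') (PiM (C - D) (\<lambda>_. borel))"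
    unfolding g2_def
  proof (rule measurable_restrict)
    fix i assume i: "i \<in> C - D"
    have "(\<lambda>f. f (blk i)) \<in> measurable (PiM (P - {D}) ?M') (?M' (blk i))"
      by (rule measurable_component_singleton) (use blk[OF i] in auto)
    moreover have "(\<lambda>g. g i) \<in> measurable (?M' (blk i)) borel"
      by (rule measurable_component_singleton) (use blk[OF i] in auto)
    ultimately show "(\<lambda>f. f (blk i) i) \<in> borel_measurable (PiM (P - {D}) ?M')"
      by (rule measurable_compose)
  qed
  have "g1 \<circ> (\<lambda>\<omega>. restrict (\<lambda>D. ?X D \<omega>) {D}) = ?X D"
    by (auto simp: g1_def fun_eq_iff)
  moreover have "g2 \<circ> (\<lambda>\<omega>. restrict (\<lambda>D. ?X D \<omega>) (P - {D})) = ?X (C - D)"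
    using blk by (auto simp: g2_def fun_eq_iff restrict_def)
  ultimately show ?thesis
    using indep_var_compose[OF ind m1 m2] by simp
qed

text \<open>Permuting the coordinates inside one exchangeable block does not change the
  probability of any measurable event of the full vector: by independence the joint
  law of (block, complement) is the product of the marginals, and exchangeability
  fixes the block marginal.  The full vector is recovered from the pair by merge.\<close>
lemma (in prob_space) prob_block_permutation_invariant:
  fixes T :: "nat \<Rightarrow> 'a \<Rightarrow> real"
  assumes part: "partition_on C P"
    and indep: "indep_vars (\<lambda>D. PiM D (\<lambda>_. borel)) (\<lambda>D \<omega>. \<lambda>i\<in>D. T i \<omega>) P"
    and D: "D \<in> P"
    and exch: "exchangeable_block M T D"
    and sig: "\<sigma> permutes D"
    and F: "Measurable.pred (PiM C (\<lambda>_. borel)) F"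
  shows "prob {\<omega> \<in> space M. F (\<lambda>i\<in>C. T (\<sigma> i) \<omega>)} = prob {\<omega> \<in> space M. F (\<lambda>i\<in>C. T i \<omega>)}"
proof -
  define SD where "SD = (PiM D (\<lambda>_. borel) :: (nat \<Rightarrow> real) measure)"
  define SY where "SY = (PiM (C - D) (\<lambda>_. borel) :: (nat \<Rightarrow> real) measure)"
  define X where "X = (\<lambda>\<omega>. \<lambda>i\<in>D. T i \<omega>)"
  define X' where "X' = (\<lambda>\<omega>. \<lambda>i\<in>D. T (\<sigma> i) \<omega>)"
  define Y where "Y = (\<lambda>\<omega>. \<lambda>i\<in>C - D. T i \<omega>)"
  have DC: "D \<union> (C - D) = C" using part D unfolding partition_on_def by auto
  have iv: "indep_var SD X SY Y"
    unfolding SD_def SY_def X_def Y_def by (rule indep_block_complement[OF part indep D])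
  define h where "h = (\<lambda>f::nat \<Rightarrow> real. \<lambda>i\<in>D. f (\<sigma> i))"
  have hm: "h \<in> measurable SD SD"
    unfolding h_def SD_def
  proof (rule measurable_restrict)
    fix i assume "i \<in> D"
    then have "\<sigma> i \<in> D" using sig by (simp add: permutes_in_image)
    then show "(\<lambda>f. f (\<sigma> i)) \<in> borel_measurable (PiM D (\<lambda>_. borel))"
      by (rule measurable_component_singleton)
  qed
  have "h \<circ> X = X'"
    by (auto simp: h_def X_def X'_def sig permutes_in_image restrict_def fun_eq_iff)
  then have iv': "indep_var SD X' SY Y"
    using indep_var_compose[OF iv hm measurable_ident] by simp
  have "distr M SD X' = distr M SD X"
    using exch sig unfolding exchangeable_block_def SD_def X_def X'_def by blast
  then have joint: "distr M (SD \<Otimes>\<^sub>M SY) (\<lambda>\<omega>. (X' \<omega>, Y \<omega>))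
                  = distr M (SD \<Otimes>\<^sub>M SY) (\<lambda>\<omega>. (X \<omega>, Y \<omega>))"
    using iv iv' unfolding indep_var_distribution_eq by metis
  have pm: "(\<lambda>\<omega>. (X \<omega>, Y \<omega>)) \<in> measurable M (SD \<Otimes>\<^sub>M SY)"
    and pm': "(\<lambda>\<omega>. (X' \<omega>, Y \<omega>)) \<in> measurable M (SD \<Otimes>\<^sub>M SY)"
    using iv iv' by (auto intro: measurable_Pair dest: indep_var_rv1 indep_var_rv2)
  define S where "S = {p \<in> space (SD \<Otimes>\<^sub>M SY). F (merge D (C - D) p)}"
  have "merge D (C - D) \<in> measurable (SD \<Otimes>\<^sub>M SY) (PiM C (\<lambda>_. borel))"
    using measurable_merge[of D "C - D" "\<lambda>_. borel"] unfolding SD_def SY_def DC .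
  from measurable_compose[OF this F] have S: "S \<in> sets (SD \<Otimes>\<^sub>M SY)"
    unfolding S_def pred_def .
  have "merge D (C - D) (X \<omega>, Y \<omega>) = (\<lambda>i\<in>C. T i \<omega>)" for \<omega>
    using DC by (auto simp: merge_def X_def Y_def fun_eq_iff)
  then have e: "{\<omega> \<in> space M. F (\<lambda>i\<in>C. T i \<omega>)} = (\<lambda>\<omega>. (X \<omega>, Y \<omega>)) -` S \<inter> space M"
    using measurable_space[OF pm] unfolding S_def by auto
  have "merge D (C - D) (X' \<omega>, Y \<omega>) = (\<lambda>i\<in>C. T (\<sigma> i) \<omega>)" for \<omega>
    using DC sig by (auto simp: merge_def X'_def Y_def fun_eq_iff permutes_not_in)
  then have e': "{\<omega> \<in> space M. F (\<lambda>i\<in>C. T (\<sigma> i) \<omega>)} = (\<lambda>\<omega>. (X' \<omega>, Y \<omega>)) -` S \<inter> space M"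
    using measurable_space[OF pm'] unfolding S_def by auto
  show ?thesis
    unfolding e e' using measure_distr[OF pm' S] measure_distr[OF pm S] joint by simp
qed

lemma (in prob_space) rel_quality_block_permutation:
  fixes T :: "nat \<Rightarrow> 'a \<Rightarrow> real"
  assumes part: "partition_on C P" and finC: "finite C"
    and indep: "indep_vars (\<lambda>D. PiM D (\<lambda>_. borel)) (\<lambda>D \<omega>. \<lambda>i\<in>D. T i \<omega>) P"
    and D: "D \<in> P"
    and exch: "exchangeable_block M T D"
    and sig: "\<sigma> permutes D"
    and D': "D' \<subseteq> C" "\<sigma> ` D' = D'" and B: "B \<subseteq> D'"
  shows "rel_quality M T D' (\<sigma> ` B) = rel_quality M T D' B"
proof -
  define F where "F = (\<lambda>h::nat \<Rightarrow> real. \<forall>i\<in>D' - B. \<forall>j\<in>B. h i < h j)"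
  have "finite (D' - B)" "finite B" using finC D' B
    by (meson finite_subset subset_trans Diff_subset)+
  then have F: "Measurable.pred (PiM C (\<lambda>_. borel)) F"
    unfolding F_def by (rule pred_coords_ordered) (use D' B in auto)
  have "inj \<sigma>" using sig by (rule permutes_inj)
  then have dif: "D' - \<sigma> ` B = \<sigma> ` (D' - B)" using D'(2) by (simp add: image_set_diff)
  have inC: "i \<in> C" if "i \<in> D'" for i using that D' by auto
  have "(\<forall>i\<in>D' - B. \<forall>j\<in>B. T i \<omega> < T j \<omega>) = F (\<lambda>i\<in>C. T i \<omega>)" for \<omega>
    unfolding F_def using inC B by auto
  then have "rel_quality M T D' B = prob {\<omega> \<in> space M. F (\<lambda>i\<in>C. T i \<omega>)}"
    unfolding rel_quality_def by simp
  moreover have "(\<forall>i\<in>D' - \<sigma> ` B. \<forall>j\<in>\<sigma> ` B. T i \<omega> < T j \<omega>) = F (\<lambda>i\<in>C. T (\<sigma> i) \<omega>)" for \<omega>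
    unfolding dif F_def using inC B by auto
  then have "rel_quality M T D' (\<sigma> ` B) = prob {\<omega> \<in> space M. F (\<lambda>i\<in>C. T (\<sigma> i) \<omega>)}"
    unfolding rel_quality_def by simp
  ultimately show ?thesis
    using prob_block_permutation_invariant[OF part indep D exch sig F] by simp
qed

section \<open>Symmetry from transpositions inside blocks\<close>

lemma transpose_block_image:
  assumes part: "partition_on C P" and D: "D \<in> P" "a \<in> D" "b \<in> D" and D': "D' \<in> P"
  shows "Transposition.transpose a b ` D' = D'"
proof (cases "D' = D")
  case True then show ?thesis using permutes_image[OF permutes_swap_id[OF D(2,3)]] by simp
next
  case False
  then have "D \<inter> D' = {}" using part D D' unfolding partition_on_def by (metis disjointD)
  then have "a \<notin> D'" "b \<notin> D'" using D by auto
  then show ?thesis by (auto simp: image_iff)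
qed

text \<open>A function on subsets of a finite C that is invariant under transpositions
  inside blocks is partition-symmetric: two sets with the same block counts are
  connected by finitely many such swaps (induction on the size of A - B).\<close>
lemma partition_symmetric_if_swap_invariant:
  fixes Q :: "nat set \<Rightarrow> real"
  assumes finC: "finite C" and part: "partition_on C P"
    and swap: "\<And>D a b A. D \<in> P \<Longrightarrow> a \<in> D \<Longrightarrow> b \<in> D \<Longrightarrow> A \<subseteq> C \<Longrightarrow>
                 Q (Transposition.transpose a b ` A) = Q A"
  shows "partition_symmetric C P Q"
proof -
  have "Q A = Q B" if "A \<subseteq> C" "B \<subseteq> C" "\<forall>D\<in>P. card (A \<inter> D) = card (B \<inter> D)" for A B
    using that
  proof (induction "card (A - B)" arbitrary: A rule: less_induct)
    case (less A)
    show ?case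
    proof (cases "A = B")
      case False
      then obtain x where x: "x \<in> A - B \<or> x \<in> B - A" by blast
      then have "x \<in> C" using less by auto
      then obtain D where "D \<in> P" "x \<in> D" using part unfolding partition_on_def by auto
      then have D: "D \<in> P" "A \<inter> D \<noteq> B \<inter> D" using x by auto
      have finD: "finite D" using D part finC unfolding partition_on_def
        by (meson Union_upper finite_subset)
      have cd: "card (A \<inter> D) = card (B \<inter> D)" using less D by auto
      text \<open>Equal counts but different traces: each side has an element the other lacks.\<close>
      have "\<not> A \<inter> D \<subseteq> B \<inter> D"
        using card_subset_eq[of "B \<inter> D" "A \<inter> D"] finD cd D(2) by auto
      then obtain a where a: "a \<in> A" "a \<notin> B" "a \<in> D" by auto
      have "\<not> B \<inter> D \<subseteq> A \<inter> D"
        using card_subset_eq[of "A \<inter> D" "B \<inter> D"] finD cd D(2) by auto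
      then obtain b where b: "b \<in> B" "b \<notin> A" "b \<in> D" by auto
      define A' where "A' = Transposition.transpose a b ` A"
      have A'_eq: "A' = insert b (A - {a})"
        unfolding A'_def using a b
        by (auto simp: Transposition.transpose_def image_iff split: if_splits)
      have "finite (A - B)" using less finC by (meson finite_Diff finite_subset)
      moreover have "A' - B = (A - B) - {a}" using A'_eq b by auto
      ultimately have smaller: "card (A' - B) < card (A - B)"
        using a by (metis DiffI card_Diff1_less)
      have counts: "\<forall>D'\<in>P. card (A' \<inter> D') = card (B \<inter> D')"
      proof
        fix D' assume D': "D' \<in> P"
        have "A' \<inter> D' = Transposition.transpose a b ` (A \<inter> D')"
          unfolding A'_def using transpose_block_image[OF part D(1) a(3) b(3) D']
          by (metis image_Int inj_transpose)
        then show "card (A' \<inter> D') = card (B \<inter> D')"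
          using less D' by (simp add: card_image inj_on_transpose)
      qed
      have "A' \<subseteq> C" using A'_eq less b by auto
      then have "Q A' = Q B" using less.hyps[OF smaller] less.prems(2) counts by blast
      moreover have "Q A' = Q A" unfolding A'_def by (rule swap[OF D(1) a(3) b(3) less(2)])
      ultimately show ?thesis by simp
    qed simp
  qed
  then show ?thesis unfolding partition_symmetric_def by blast
qed

lemma symmetric_quotient_factor:
  fixes q p :: "nat set \<Rightarrow> real"
  assumes sym_q: "partition_symmetric C P q" and sym_p: "partition_symmetric C P p"
    and zero: "\<And>A. A \<subseteq> C \<Longrightarrow> p A = 0 \<Longrightarrow> q A = 0"
  shows "\<exists>c. partition_symmetric C P c \<and> (\<forall>A. A \<subseteq> C \<longrightarrow> q A = c A * p A)"
proof -
  define c where "c A = (if p A = 0 then 0 else q A / p A)" for A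
  have "partition_symmetric C P c"
    unfolding partition_symmetric_def
  proof (intro allI impI)
    fix A B assume same_counts: "A \<subseteq> C" "B \<subseteq> C" "\<forall>D\<in>P. card (A \<inter> D) = card (B \<inter> D)"
    have "q A = q B" "p A = p B"
      using sym_q sym_p same_counts unfolding partition_symmetric_def by blast+
    then show "c A = c B" unfolding c_def by simp
  qed
  moreover have "q A = c A * p A" if "A \<subseteq> C" for A
    using zero[OF that] unfolding c_def by simp
  ultimately show ?thesis by blast
qed

section \<open>Independent exchangeable blocks\<close>

locale exchangeable_blocks = prob_space M
  for M :: "'w measure" and T :: "nat \<Rightarrow> 'w \<Rightarrow> real" and C :: "nat set" and P :: "nat set set" +
  assumes finite_C: "finite C"
    and meas: "\<And>i. i \<in> C \<Longrightarrow> T i \<in> borel_measurable M"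
    and part: "partition_on C P"
    and indep: "indep_vars (\<lambda>D. PiM D (\<lambda>_. borel)) (\<lambda>D \<omega>. \<lambda>i\<in>D. T i \<omega>) P"
    and exch: "\<And>D. D \<in> P \<Longrightarrow> exchangeable_block M T D"
begin

lemma block_subset: "D \<in> P \<Longrightarrow> D \<subseteq> C"
  using part unfolding partition_on_def by auto

lemma finite_blocks: "finite P"
  using finite_C part unfolding partition_on_def by (metis finite_UnionD)

lemma rel_quality_swap:
  assumes "D \<in> P" "a \<in> D" "b \<in> D" "D' \<subseteq> C" "Transposition.transpose a b ` D' = D'" "B \<subseteq> D'"
  shows "rel_quality M T D' (Transposition.transpose a b ` B) = rel_quality M T D' B"
  using rel_quality_block_permutation[OF part finite_C indep assms(1) exch[OF assms(1)]
          permutes_swap_id[OF assms(2,3)] assms(4-6)] .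

lemma symmetric_rel_quality: "partition_symmetric C P (rel_quality M T C)"
proof (rule partition_symmetric_if_swap_invariant[OF finite_C part])
  fix D a b A assume D: "D \<in> P" "a \<in> D" "b \<in> D" and "A \<subseteq> C"
  moreover have "Transposition.transpose a b ` C = C"
    using permutes_image[OF permutes_subset[OF permutes_swap_id[OF D(2,3)] block_subset[OF D(1)]]] .
  ultimately show "rel_quality M T C (Transposition.transpose a b ` A) = rel_quality M T C A"
    by (intro rel_quality_swap) auto
qed

lemma symmetric_block_product:
  "partition_symmetric C P (\<lambda>A. \<Prod>D\<in>P. rel_quality M T D (A \<inter> D))"
proof (rule partition_symmetric_if_swap_invariant[OF finite_C part])
  fix D a b A assume D: "D \<in> P" "a \<in> D" "b \<in> D"
  show "(\<Prod>D'\<in>P. rel_quality M T D' (Transposition.transpose a b ` A \<inter> D'))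
      = (\<Prod>D'\<in>P. rel_quality M T D' (A \<inter> D'))"
  proof (rule prod.cong[OF refl])
    fix D' assume D': "D' \<in> P"
    have im: "Transposition.transpose a b ` D' = D'"
      by (rule transpose_block_image[OF part D D'])
    then have "Transposition.transpose a b ` A \<inter> D' = Transposition.transpose a b ` (A \<inter> D')"
      by (metis image_Int inj_transpose)
    then show "rel_quality M T D' (Transposition.transpose a b ` A \<inter> D') = rel_quality M T D' (A \<inter> D')"
      using rel_quality_swap[OF D block_subset[OF D'] im, of "A \<inter> D'"] by simp
  qed
qed

text \<open>Ordering all of C - A below A in particular orders D - A below A \<inter> D, so the
  quality of A is bounded by that of its trace on any block.\<close>
lemma rel_quality_le_block:
  assumes "D \<in> P"
  shows "rel_quality M T C A \<le> rel_quality M T D (A \<inter> D)"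
proof -
  have DC: "D \<subseteq> C" by (rule block_subset[OF assms])
  have "finite (D - A \<inter> D)" "finite (A \<inter> D)"
    using DC finite_C by (meson finite_Diff finite_Int finite_subset)+
  then have "{\<omega> \<in> space M. \<forall>i\<in>D - A \<inter> D. \<forall>j\<in>A \<inter> D. T i \<omega> < T j \<omega>} \<in> sets M"
    by (rule ordered_event_sets) (use meas DC in auto)
  moreover have "{\<omega> \<in> space M. \<forall>i\<in>C - A. \<forall>j\<in>A. T i \<omega> < T j \<omega>}
      \<subseteq> {\<omega> \<in> space M. \<forall>i\<in>D - A \<inter> D. \<forall>j\<in>A \<inter> D. T i \<omega> < T j \<omega>}"
    using DC by auto
  ultimately show ?thesis
    unfolding rel_quality_def by (rule finite_measure_mono[rotated])
qed

theorem decomposable: "partition_decomposable M T C P"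
proof -
  have zero: "rel_quality M T C A = 0"
    if product_zero: "(\<Prod>D\<in>P. rel_quality M T D (A \<inter> D)) = 0" for A
  proof -
    obtain D where D: "D \<in> P" "rel_quality M T D (A \<inter> D) = 0"
      using product_zero finite_blocks by (meson prod_zero_iff)
    have "0 \<le> rel_quality M T C A"
      unfolding rel_quality_def by (rule measure_nonneg)
    then show ?thesis using rel_quality_le_block[OF D(1), of A] D(2) by linarith
  qed
  show ?thesis
    unfolding partition_decomposable_def
    by (rule symmetric_quotient_factor[OF symmetric_rel_quality symmetric_block_product])
       (use zero in blast)
qed

end

theorem corollary10:
  fixes M :: "'w measure" and T :: "nat \<Rightarrow> 'w \<Rightarrow> real" and n :: nat and P :: "nat set set"
  assumes "prob_space M"
    and meas: "\<And>i. i \<in> {1..n} \<Longrightarrow> T i \<in> borel_measurable M"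
    and no_ties: "AE \<omega> in M. inj_on (\<lambda>i. T i \<omega>) {1..n}"
    and part: "partition_on {1..n} P"
    and indep: "prob_space.indep_vars M (\<lambda>D. PiM D (\<lambda>_. borel))
                  (\<lambda>D \<omega>. \<lambda>i\<in>D. T i \<omega>) P"
    and exch: "\<And>D. D \<in> P \<Longrightarrow> exchangeable_block M T D"
  shows "partition_decomposable M T {1..n} P"
proof -
  interpret prob_space M by fact
  interpret exchangeable_blocks M T "{1..n}" P
    by unfold_locales (use meas part indep exch in auto)
  show ?thesis by (rule decomposable)
qed

end
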